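(* If a complete theory $T$ is convexly orderable, then $T$ is dp-small.
   Context: Let $T$ be a complete theory in a language $L$ with monster model $\mathcal{U}$; $\mathcal{U}_y$ denotes the $|y|$-tuples from $\mathcal{U}$, and $x$ denotes a single variable. An $L$-structure $M$ is convexly orderable if there is a linear order $\lhd$ on $M$ (not necessarily definable) such that for every $L$-formula $\varphi(x;y)$ there is $K_\varphi<\omega$ with $\varphi(M;b)$ a union of at most $K_\varphi$ $\lhd$-convex subsets of $M$ for every $b\in M_y$; $T$ is convexly orderable if some (equivalently every) model of $T$ is. A partial type $\pi(x)$ is dp-small if there do not exist $L(\mathcal{U})$-formulas $\varphi_i(x)$ ($i<\omega$), an $L$-formula $\psi(x;y)$ and $b_j\in\mathcal{U}_y$ ($j<\omega$) such that for all $i_0,j_0<\omega$ the type $\pi(x)\cup\{\varphi_{i_0}(x),\psi(x;b_{j_0})\}\cup\{\neg\varphi_i(x): i\ne i_0\}\cup\{\neg\psi(x;b_j): j\neq j_0\}$ is consistent. $T$ is dp-small if $x=x$ is dp-small. *)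

theory Defs
  imports Main
begin

text \<open>A language L is given by arity maps fa (function symbols, constants have arity 0)
  and ra (relation symbols). Equality is a logical symbol. Variables are natural numbers.\<close>

datatype 'f trm = Var nat | Fn 'f "'f trm list"

datatype ('f, 'r) fm =
    Eq "'f trm" "'f trm"
  | Rl 'r "'f trm list"
  | Ng "('f, 'r) fm"
  | Cj "('f, 'r) fm" "('f, 'r) fm"
  | Ex nat "('f, 'r) fm"

fun wf_trm :: "('f \<Rightarrow> nat) \<Rightarrow> 'f trm \<Rightarrow> bool" where
  "wf_trm fa (Var n) = True"
| "wf_trm fa (Fn f ts) = (length ts = fa f \<and> (\<forall>t\<in>set ts. wf_trm fa t))"

fun wf_fm :: "('f \<Rightarrow> nat) \<Rightarrow> ('r \<Rightarrow> nat) \<Rightarrow> ('f, 'r) fm \<Rightarrow> bool" where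
  "wf_fm fa ra (Eq s t) = (wf_trm fa s \<and> wf_trm fa t)"
| "wf_fm fa ra (Rl r ts) = (length ts = ra r \<and> (\<forall>t\<in>set ts. wf_trm fa t))"
| "wf_fm fa ra (Ng p) = wf_fm fa ra p"
| "wf_fm fa ra (Cj p q) = (wf_fm fa ra p \<and> wf_fm fa ra q)"
| "wf_fm fa ra (Ex n p) = wf_fm fa ra p"

fun fv_trm :: "'f trm \<Rightarrow> nat set" where
  "fv_trm (Var n) = {n}"
| "fv_trm (Fn f ts) = (\<Union>t\<in>set ts. fv_trm t)"

fun fv :: "('f, 'r) fm \<Rightarrow> nat set" where
  "fv (Eq s t) = fv_trm s \<union> fv_trm t"
| "fv (Rl r ts) = (\<Union>t\<in>set ts. fv_trm t)"
| "fv (Ng p) = fv p"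
| "fv (Cj p q) = fv p \<union> fv q"
| "fv (Ex n p) = fv p - {n}"

definition sentence :: "('f \<Rightarrow> nat) \<Rightarrow> ('r \<Rightarrow> nat) \<Rightarrow> ('f, 'r) fm \<Rightarrow> bool" where
  "sentence fa ra \<sigma> \<longleftrightarrow> wf_fm fa ra \<sigma> \<and> fv \<sigma> = {}"

record ('a, 'f, 'r) struct =
  dom :: "'a set"
  fint :: "'f \<Rightarrow> 'a list \<Rightarrow> 'a"
  rint :: "'r \<Rightarrow> 'a list \<Rightarrow> bool"

definition is_struct :: "('f \<Rightarrow> nat) \<Rightarrow> ('a, 'f, 'r) struct \<Rightarrow> bool" where
  "is_struct fa M \<longleftrightarrow> dom M \<noteq> {} \<and>
     (\<forall>f as. length as = fa f \<and> set as \<subseteq> dom M \<longrightarrow> fint M f as \<in> dom M)"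

fun eval :: "('a, 'f, 'r) struct \<Rightarrow> (nat \<Rightarrow> 'a) \<Rightarrow> 'f trm \<Rightarrow> 'a" where
  "eval M e (Var n) = e n"
| "eval M e (Fn f ts) = fint M f (map (eval M e) ts)"

fun sat :: "('a, 'f, 'r) struct \<Rightarrow> (nat \<Rightarrow> 'a) \<Rightarrow> ('f, 'r) fm \<Rightarrow> bool" where
  "sat M e (Eq s t) = (eval M e s = eval M e t)"
| "sat M e (Rl r ts) = rint M r (map (eval M e) ts)"
| "sat M e (Ng p) = (\<not> sat M e p)"
| "sat M e (Cj p q) = (sat M e p \<and> sat M e q)"
| "sat M e (Ex n p) = (\<exists>a\<in>dom M. sat M (e(n := a)) p)"

definition models :: "('f \<Rightarrow> nat) \<Rightarrow> ('r \<Rightarrow> nat) \<Rightarrow> ('a, 'f, 'r) struct \<Rightarrow> ('f, 'r) fm set \<Rightarrow> bool" where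
  "models fa ra M T \<longleftrightarrow> is_struct fa M \<and>
     (\<forall>\<sigma>\<in>T. \<forall>e. (\<forall>n. e n \<in> dom M) \<longrightarrow> sat M e \<sigma>)"

text \<open>A complete theory: a set of L-sentences containing, for every L-sentence,
  either it or its negation (i.e. deductively closed and complete, like Th(M)).
  Its consistency is provided by the convex orderability hypothesis (which gives a model).\<close>

definition complete_theory :: "('f \<Rightarrow> nat) \<Rightarrow> ('r \<Rightarrow> nat) \<Rightarrow> ('f, 'r) fm set \<Rightarrow> bool" where
  "complete_theory fa ra T \<longleftrightarrow> (\<forall>\<sigma>\<in>T. sentence fa ra \<sigma>) \<and>
     (\<forall>\<sigma>. sentence fa ra \<sigma> \<longrightarrow> \<sigma> \<in> T \<or> Ng \<sigma> \<in> T)"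

text \<open>Convention: in a formula phi(x;y) with |y| = n, the variable x is Var 0 and
  y = (Var 1, ..., Var n). The assignment sending x to a and y to the tuple bs:\<close>

definition asg :: "'a \<Rightarrow> 'a list \<Rightarrow> nat \<Rightarrow> 'a" where
  "asg a bs k = (if k = 0 then a else if k \<le> length bs then bs ! (k - 1) else a)"

definition defset :: "('a, 'f, 'r) struct \<Rightarrow> ('f, 'r) fm \<Rightarrow> 'a list \<Rightarrow> 'a set" where
  "defset M \<phi> bs = {a \<in> dom M. sat M (asg a bs) \<phi>}"

definition convex_in :: "('a, 'f, 'r) struct \<Rightarrow> ('a \<times> 'a) set \<Rightarrow> 'a set \<Rightarrow> bool" where
  "convex_in M r S \<longleftrightarrow> S \<subseteq> dom M \<and>
     (\<forall>a\<in>S. \<forall>c\<in>S. \<forall>d\<in>dom M. (a, d) \<in> r \<and> (d, c) \<in> r \<longrightarrow> d \<in> S)"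

definition convexly_orderable :: "('f \<Rightarrow> nat) \<Rightarrow> ('r \<Rightarrow> nat) \<Rightarrow> ('a, 'f, 'r) struct \<Rightarrow> bool" where
  "convexly_orderable fa ra M \<longleftrightarrow>
     (\<exists>r. linear_order_on (dom M) r \<and>
       (\<forall>\<phi> n. wf_fm fa ra \<phi> \<and> fv \<phi> \<subseteq> {0..n} \<longrightarrow>
          (\<exists>K::nat. \<forall>bs. length bs = n \<and> set bs \<subseteq> dom M \<longrightarrow>
             (\<exists>C. finite C \<and> card C \<le> K \<and> (\<forall>S\<in>C. convex_in M r S) \<and>
                  \<Union>C = defset M \<phi> bs))))"

definition convexly_orderable_thy ::
  "('f \<Rightarrow> nat) \<Rightarrow> ('r \<Rightarrow> nat) \<Rightarrow> ('f, 'r) fm set \<Rightarrow> 'a itself \<Rightarrow> bool" where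
  "convexly_orderable_thy fa ra T _ \<longleftrightarrow>
     (\<exists>M :: ('a, 'f, 'r) struct. models fa ra M T \<and> convexly_orderable fa ra M)"

text \<open>An L(N)-formula in the single free variable x is a pair (chi, c) with chi an
  L-formula whose free variables are among Var 0 (= x) and Var 1..Var |c| (the parameters c).
  A partial type over N is consistent iff it is finitely satisfiable in N
  (consistency with the elementary diagram of N, by compactness).\<close>

definition finsat :: "('a, 'f, 'r) struct \<Rightarrow> (('f, 'r) fm \<times> 'a list) set \<Rightarrow> bool" where
  "finsat N \<pi> \<longleftrightarrow> (\<forall>F \<subseteq> \<pi>. finite F \<longrightarrow>
     (\<exists>a\<in>dom N. \<forall>(\<chi>, c)\<in>F. sat N (asg a c) \<chi>))"

definition dp_pattern :: "('f \<Rightarrow> nat) \<Rightarrow> ('r \<Rightarrow> nat) \<Rightarrow> ('a, 'f, 'r) struct \<Rightarrow> bool" where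
  "dp_pattern fa ra N \<longleftrightarrow>
     (\<exists>(\<phi>s :: nat \<Rightarrow> ('f, 'r) fm) (cs :: nat \<Rightarrow> 'a list) \<psi> n (bs :: nat \<Rightarrow> 'a list).
        (\<forall>i. wf_fm fa ra (\<phi>s i) \<and> fv (\<phi>s i) \<subseteq> {0..length (cs i)} \<and> set (cs i) \<subseteq> dom N) \<and>
        wf_fm fa ra \<psi> \<and> fv \<psi> \<subseteq> {0..n} \<and>
        (\<forall>j. length (bs j) = n \<and> set (bs j) \<subseteq> dom N) \<and>
        (\<forall>i0 j0. finsat N
            ({(\<phi>s i0, cs i0), (\<psi>, bs j0)}
             \<union> {(Ng (\<phi>s i), cs i) | i. i \<noteq> i0}
             \<union> {(Ng \<psi>, bs j) | j. j \<noteq> j0})))"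

definition dp_small_thy ::
  "('f \<Rightarrow> nat) \<Rightarrow> ('r \<Rightarrow> nat) \<Rightarrow> ('f, 'r) fm set \<Rightarrow> 'b itself \<Rightarrow> bool" where
  "dp_small_thy fa ra T _ \<longleftrightarrow>
     (\<forall>N :: ('b, 'f, 'r) struct. models fa ra N T \<longrightarrow> \<not> dp_pattern fa ra N)"

end

theory Submission
  imports Defs "HOL-Library.Nat_Bijection"
begin

text \<open>
  Suppose a model \<open>N\<close> of \<open>T\<close> carries a dp-pattern with rows \<open>\<phi>\<^sub>i(x; c\<^sub>i)\<close> and columns
  \<open>\<psi>(x; b\<^sub>j)\<close>, and let \<open>M\<close> be a convexly ordered model of \<open>T\<close>, in which every instance of
  \<open>\<psi>\<close> is a union of at most \<open>K\<close> convex sets and every instance of \<open>\<phi>\<^sub>i\<close> one of at most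
  \<open>K\<^sub>i\<close>. The fragment of the pattern with \<open>K + 1\<close> rows and one more column than
  \<open>K\<^sub>0 + \<dots> + K\<^sub>K\<close> is expressed by a single formula, true in \<open>N\<close> and hence, by completeness,
  satisfiable in \<open>M\<close>. In \<open>M\<close>, two of the \<open>K + 1\<close> points of a column lie in one convex piece
  of that column, so one of them sees, inside the piece, a larger point outside its own row.
  Label the column by that row \<open>i\<close> and the convex piece of \<open>\<phi>\<^sub>i\<close> containing the point: two
  columns with the same label would push a point of one column into the other, so the
  labelling is injective, which is impossible with only \<open>K\<^sub>0 + \<dots> + K\<^sub>K\<close> labels.
\<close>

fun ren_trm :: "(nat \<Rightarrow> nat) \<Rightarrow> 'f trm \<Rightarrow> 'f trm" where
  "ren_trm f (Var n) = Var (f n)"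
| "ren_trm f (Fn g ts) = Fn g (map (ren_trm f) ts)"

fun ren :: "(nat \<Rightarrow> nat) \<Rightarrow> ('f, 'r) fm \<Rightarrow> ('f, 'r) fm" where
  "ren f (Eq s t) = Eq (ren_trm f s) (ren_trm f t)"
| "ren f (Rl r ts) = Rl r (map (ren_trm f) ts)"
| "ren f (Ng p) = Ng (ren f p)"
| "ren f (Cj p q) = Cj (ren f p) (ren f q)"
| "ren f (Ex n p) = Ex (f n) (ren f p)"

lemma eval_ren_trm: "eval M e (ren_trm f t) = eval M (e \<circ> f) t"
  by (induction t) (auto cong: map_cong)

lemma wf_trm_ren_trm [simp]: "wf_trm fa (ren_trm f t) = wf_trm fa t"
  by (induction t) auto

lemma wf_fm_ren [simp]: "wf_fm fa ra (ren f p) = wf_fm fa ra p"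
  by (induction p) auto

lemma sat_ren:
  assumes "inj f"
  shows "sat M e (ren f p) = sat M (e \<circ> f) p"
proof (induction p arbitrary: e)
  case (Ex n p)
  have "e(f n := a) \<circ> f = (e \<circ> f)(n := a)" for a
    using assms by (auto simp: fun_eq_iff inj_eq)
  then have "sat M (e(f n := a)) (ren f p) = sat M ((e \<circ> f)(n := a)) p" for a
    using Ex.IH by metis
  then show ?case by (simp only: ren.simps sat.simps)
qed (auto simp: eval_ren_trm comp_def)

lemma eval_cong: "\<forall>v\<in>fv_trm t. e v = e' v \<Longrightarrow> eval M e t = eval M e' t"
  by (induction t) (auto cong: map_cong)

lemma sat_cong: "\<forall>v\<in>fv p. e v = e' v \<Longrightarrow> sat M e p = sat M e' p"
proof (induction p arbitrary: e e')
  case (Eq s t)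
  then show ?case using eval_cong[of s e e' M] eval_cong[of t e e' M] by simp
next
  case (Rl r ts)
  then have "map (eval M e) ts = map (eval M e') ts"
    by (auto intro!: eval_cong)
  then show ?case by (simp only: sat.simps)
next
  case (Ex n p)
  then have "sat M (e(n := a)) p = sat M (e'(n := a)) p" for a
    by (intro Ex.IH) auto
  then show ?case by simp
next
  case (Cj p q)
  then show ?case by (metis UnCI fv.simps(4) sat.simps(4))
qed auto

lemma finite_fv_trm: "finite (fv_trm t)"
  by (induction t) auto

lemma finite_fv: "finite (fv p)"
  by (induction p) (auto simp: finite_fv_trm)

definition Conj :: "('f, 'r) fm list \<Rightarrow> ('f, 'r) fm" where
  "Conj ps = foldr Cj ps (Eq (Var 0) (Var 0))"

lemma sat_Conj [simp]: "sat M e (Conj ps) \<longleftrightarrow> (\<forall>p\<in>set ps. sat M e p)"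
  by (induction ps) (simp_all add: Conj_def)

lemma wf_fm_Conj [simp]: "wf_fm fa ra (Conj ps) \<longleftrightarrow> (\<forall>p\<in>set ps. wf_fm fa ra p)"
  by (induction ps) (simp_all add: Conj_def)

fun Exs :: "nat list \<Rightarrow> ('f, 'r) fm \<Rightarrow> ('f, 'r) fm" where
  "Exs [] p = p"
| "Exs (v # vs) p = Ex v (Exs vs p)"

lemma wf_fm_Exs [simp]: "wf_fm fa ra (Exs vs p) = wf_fm fa ra p"
  by (induction vs) auto

lemma fv_Exs [simp]: "fv (Exs vs p) = fv p - set vs"
  by (induction vs) auto

lemma sat_Exs:
  "sat M e (Exs vs p) \<longleftrightarrow>
     (\<exists>e'. (\<forall>v. v \<notin> set vs \<longrightarrow> e' v = e v) \<and> (\<forall>v\<in>set vs. e' v \<in> dom M) \<and> sat M e' p)"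
proof (induction vs arbitrary: e)
  case Nil
  then show ?case by (auto simp: fun_eq_iff) (metis ext)
next
  case (Cons w vs)
  show ?case
  proof
    assume "sat M e (Exs (w # vs) p)"
    then obtain a where "a \<in> dom M" "sat M (e(w := a)) (Exs vs p)" by auto
    moreover from this obtain e' where "\<forall>v. v \<notin> set vs \<longrightarrow> e' v = (e(w := a)) v"
      "\<forall>v\<in>set vs. e' v \<in> dom M" "sat M e' p"
      using Cons.IH by blast
    ultimately show "\<exists>e'. (\<forall>v. v \<notin> set (w # vs) \<longrightarrow> e' v = e v) \<and>
        (\<forall>v\<in>set (w # vs). e' v \<in> dom M) \<and> sat M e' p"
      by (intro exI[of _ e']) auto
  next
    assume "\<exists>e'. (\<forall>v. v \<notin> set (w # vs) \<longrightarrow> e' v = e v) \<and>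
        (\<forall>v\<in>set (w # vs). e' v \<in> dom M) \<and> sat M e' p"
    then obtain e' where e': "\<forall>v. v \<notin> set (w # vs) \<longrightarrow> e' v = e v"
      "\<forall>v\<in>set (w # vs). e' v \<in> dom M" "sat M e' p"
      by blast
    then have "sat M (e(w := e' w)) (Exs vs p)"
      by (subst Cons.IH) (intro exI[of _ e'], auto)
    with e' show "sat M e (Exs (w # vs) p)" by auto
  qed
qed

lemma complete_theory_transfer_sat:
  assumes T: "complete_theory fa ra T" and N: "models fa ra N T" and M: "models fa ra M T"
    and wf: "wf_fm fa ra \<phi>" and e: "\<forall>v. e v \<in> dom N" and sat: "sat N e \<phi>"
  obtains e' where "\<forall>v. e' v \<in> dom M" "sat M e' \<phi>"
proof -
  define \<sigma> where "\<sigma> = Exs (sorted_list_of_set (fv \<phi>)) \<phi>"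
  have vars: "set (sorted_list_of_set (fv \<phi>)) = fv \<phi>"
    by (simp add: finite_fv)
  have sentence: "sentence fa ra \<sigma>"
    using wf vars by (simp add: sentence_def \<sigma>_def)
  have "sat N e \<sigma>"
    using e sat unfolding \<sigma>_def sat_Exs by blast
  have "\<sigma> \<in> T"
  proof (rule ccontr)
    assume "\<sigma> \<notin> T"
    with T sentence have "Ng \<sigma> \<in> T"
      unfolding complete_theory_def by blast
    with N e have "sat N e (Ng \<sigma>)"
      unfolding models_def by blast
    with \<open>sat N e \<sigma>\<close> show False by simp
  qed
  obtain d where d: "d \<in> dom M"
    using M unfolding models_def is_struct_def by blast
  have "\<forall>e. (\<forall>v. e v \<in> dom M) \<longrightarrow> sat M e \<sigma>"
    using M \<open>\<sigma> \<in> T\<close> unfolding models_def by blast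
  with d have "sat M (\<lambda>_. d) \<sigma>"
    by simp
  then obtain e' where "\<forall>v. v \<notin> fv \<phi> \<longrightarrow> e' v = d" "\<forall>v\<in>fv \<phi>. e' v \<in> dom M" "sat M e' \<phi>"
    unfolding \<sigma>_def sat_Exs vars by blast
  with d that show thesis
    by blast
qed

section \<open>Finite ict-patterns as formulas\<close>

text \<open>Parameter \<open>k \<ge> 1\<close> of slot \<open>s\<close> is the variable \<open>pvar s k\<close>; variable \<open>0\<close> is the object
  variable \<open>x\<close> shared by all slots.\<close>

definition pvar :: "nat \<Rightarrow> nat \<Rightarrow> nat" where
  "pvar s k = (if k = 0 then 0 else Suc (prod_encode (s, k)))"

lemma pvar_0 [simp]: "pvar s 0 = 0"
  by (simp add: pvar_def)

lemma pvar_eq_0_iff [simp]: "pvar s k = 0 \<longleftrightarrow> k = 0"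
  by (simp add: pvar_def)

lemma inj_pvar: "inj (pvar s)"
  by (rule injI) (auto simp: pvar_def split: if_splits dest: inj_onD[OF inj_prod_encode])

definition read_slot :: "(nat \<Rightarrow> 'a) \<Rightarrow> nat \<Rightarrow> nat \<Rightarrow> 'a list" where
  "read_slot e s m = map (\<lambda>k. e (pvar s (Suc k))) [0..<m]"

lemma length_read_slot [simp]: "length (read_slot e s m) = m"
  by (simp add: read_slot_def)

lemma set_read_slot_subset: "\<forall>v. e v \<in> D \<Longrightarrow> set (read_slot e s m) \<subseteq> D"
  by (auto simp: read_slot_def)

lemma sat_ren_pvar:
  assumes "fv \<chi> \<subseteq> {0..m}"
  shows "sat X (e(0 := a)) (ren (pvar s) \<chi>) \<longleftrightarrow> sat X (asg a (read_slot e s m)) \<chi>"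
proof -
  have "sat X (e(0 := a)) (ren (pvar s) \<chi>) \<longleftrightarrow> sat X (e(0 := a) \<circ> pvar s) \<chi>"
    by (rule sat_ren[OF inj_pvar])
  also have "\<dots> \<longleftrightarrow> sat X (asg a (read_slot e s m)) \<chi>"
  proof (rule sat_cong, intro ballI)
    fix v assume "v \<in> fv \<chi>"
    with assms have "v \<le> m" by auto
    then show "(e(0 := a) \<circ> pvar s) v = asg a (read_slot e s m) v"
      by (cases v) (simp_all add: asg_def read_slot_def)
  qed
  finally show ?thesis .
qed

definition slot_asg :: "'a \<Rightarrow> (nat \<Rightarrow> 'a list) \<Rightarrow> nat \<Rightarrow> 'a" where
  "slot_asg d tup v = (if v = 0 then d else
     case prod_decode (v - 1) of (s, k) \<Rightarrow>
       if 1 \<le> k \<and> k \<le> length (tup s) then tup s ! (k - 1) else d)"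

lemma read_slot_slot_asg [simp]: "read_slot (slot_asg d tup) s (length (tup s)) = tup s"
proof (rule nth_equalityI)
  fix k assume "k < length (read_slot (slot_asg d tup) s (length (tup s)))"
  then show "read_slot (slot_asg d tup) s (length (tup s)) ! k = tup s ! k"
    by (simp add: read_slot_def slot_asg_def pvar_def)
qed simp

lemma slot_asg_in: "d \<in> D \<Longrightarrow> (\<And>s. set (tup s) \<subseteq> D) \<Longrightarrow> slot_asg d tup v \<in> D"
  by (auto simp: slot_asg_def split: prod.split intro!: subsetD[OF _ nth_mem])

definition realize_fm :: "(('f, 'r) fm \<times> nat) list \<Rightarrow> ('f, 'r) fm" where
  "realize_fm L = Ex 0 (Conj (map (\<lambda>(\<chi>, s). ren (pvar s) \<chi>) L))"

lemma wf_fm_realize_fm: "(\<forall>(\<chi>, s)\<in>set L. wf_fm fa ra \<chi>) \<Longrightarrow> wf_fm fa ra (realize_fm L)"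
  by (auto simp: realize_fm_def)

lemma sat_realize_fm:
  assumes "\<forall>(\<chi>, s)\<in>set L. fv \<chi> \<subseteq> {0..m s}"
  shows "sat X e (realize_fm L) \<longleftrightarrow>
    (\<exists>a\<in>dom X. \<forall>(\<chi>, s)\<in>set L. sat X (asg a (read_slot e s (m s))) \<chi>)"
proof -
  have "sat X (e(0 := a)) (ren (pvar (snd x)) (fst x)) \<longleftrightarrow>
      sat X (asg a (read_slot e (snd x) (m (snd x)))) (fst x)" if "x \<in> set L" for a x
    using assms that by (cases x) (auto intro!: sat_ren_pvar)
  then show ?thesis
    by (simp add: realize_fm_def case_prod_beta del: fun_upd_apply)
qed

text \<open>The \<open>rr \<times> nn\<close> fragment of a pattern of independent contradictory types, as in the
  definition of dp-smallness, realised in a single set \<open>D\<close>.\<close>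

definition ict_pattern :: "'a set \<Rightarrow> (nat \<Rightarrow> 'a set) \<Rightarrow> (nat \<Rightarrow> 'a set) \<Rightarrow> nat \<Rightarrow> nat \<Rightarrow> bool" where
  "ict_pattern D A B rr nn \<longleftrightarrow> (\<forall>i<rr. \<forall>j<nn. \<exists>a\<in>D.
     (\<forall>i'<rr. a \<in> A i' \<longleftrightarrow> i' = i) \<and> (\<forall>j'<nn. a \<in> B j' \<longleftrightarrow> j' = j))"

definition pattern_cell ::
  "(nat \<Rightarrow> ('f, 'r) fm) \<Rightarrow> ('f, 'r) fm \<Rightarrow> nat \<Rightarrow> nat \<Rightarrow> nat \<Rightarrow> nat \<Rightarrow> (('f, 'r) fm \<times> nat) list" where
  "pattern_cell \<phi>s \<psi> rr nn i0 j0 =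
     map (\<lambda>i. (if i = i0 then \<phi>s i else Ng (\<phi>s i), 2 * i)) [0..<rr] @
     map (\<lambda>j. (if j = j0 then \<psi> else Ng \<psi>, Suc (2 * j))) [0..<nn]"

definition pattern_fm :: "(nat \<Rightarrow> ('f, 'r) fm) \<Rightarrow> ('f, 'r) fm \<Rightarrow> nat \<Rightarrow> nat \<Rightarrow> ('f, 'r) fm" where
  "pattern_fm \<phi>s \<psi> rr nn = Conj [realize_fm (pattern_cell \<phi>s \<psi> rr nn i j). i \<leftarrow> [0..<rr], j \<leftarrow> [0..<nn]]"

lemma wf_fm_pattern_fm:
  "(\<And>i. i < rr \<Longrightarrow> wf_fm fa ra (\<phi>s i)) \<Longrightarrow> wf_fm fa ra \<psi> \<Longrightarrow> wf_fm fa ra (pattern_fm \<phi>s \<psi> rr nn)"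
  by (auto simp: pattern_fm_def pattern_cell_def intro!: wf_fm_realize_fm)

lemma sat_pattern_fm:
  assumes "\<And>i. i < rr \<Longrightarrow> fv (\<phi>s i) \<subseteq> {0..lc i}" and "fv \<psi> \<subseteq> {0..n}"
  shows "sat X e (pattern_fm \<phi>s \<psi> rr nn) \<longleftrightarrow>
    ict_pattern (dom X) (\<lambda>i. defset X (\<phi>s i) (read_slot e (2 * i) (lc i)))
      (\<lambda>j. defset X \<psi> (read_slot e (Suc (2 * j)) n)) rr nn"
proof -
  define m where "m s = (if even s then lc (s div 2) else n)" for s
  have fv_cell: "\<forall>(\<chi>, s)\<in>set (pattern_cell \<phi>s \<psi> rr nn i0 j0). fv \<chi> \<subseteq> {0..m s}" for i0 j0
    using assms(2)
    by (auto simp: pattern_cell_def m_def if_distrib[of fv] split: if_splits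
        dest!: assms(1)[THEN subsetD])
  have "sat X e (realize_fm (pattern_cell \<phi>s \<psi> rr nn i0 j0)) \<longleftrightarrow>
      (\<exists>a\<in>dom X. (\<forall>i<rr. a \<in> defset X (\<phi>s i) (read_slot e (2 * i) (lc i)) \<longleftrightarrow> i = i0) \<and>
                 (\<forall>j<nn. a \<in> defset X \<psi> (read_slot e (Suc (2 * j)) n) \<longleftrightarrow> j = j0))"
    if "i0 < rr" "j0 < nn" for i0 j0
    unfolding sat_realize_fm[OF fv_cell] using that
    by (intro bex_cong) (auto simp: pattern_cell_def m_def defset_def ball_Un Ball_image_comp)
  then show ?thesis
    by (auto simp: pattern_fm_def ict_pattern_def)
qed

lemma finsat_ict_pattern:
  assumes "\<forall>i0 j0. finsat N ({(\<phi>s i0, cs i0), (\<psi>, bs j0)}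
             \<union> {(Ng (\<phi>s i), cs i) | i. i \<noteq> i0} \<union> {(Ng \<psi>, bs j) | j. j \<noteq> j0})"
  shows "ict_pattern (dom N) (\<lambda>i. defset N (\<phi>s i) (cs i)) (\<lambda>j. defset N \<psi> (bs j)) rr nn"
  unfolding ict_pattern_def
proof (intro allI impI)
  fix i0 j0
  define F where "F = {(\<phi>s i0, cs i0), (\<psi>, bs j0)}
      \<union> (\<lambda>i. (Ng (\<phi>s i), cs i)) ` {i. i < rr \<and> i \<noteq> i0} \<union> (\<lambda>j. (Ng \<psi>, bs j)) ` {j. j < nn \<and> j \<noteq> j0}"
  have "finite F" by (simp add: F_def)
  moreover have "F \<subseteq> {(\<phi>s i0, cs i0), (\<psi>, bs j0)}
      \<union> {(Ng (\<phi>s i), cs i) | i. i \<noteq> i0} \<union> {(Ng \<psi>, bs j) | j. j \<noteq> j0}"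
    by (auto simp: F_def)
  ultimately obtain a where a: "a \<in> dom N" "\<forall>(\<chi>, c)\<in>F. sat N (asg a c) \<chi>"
    using assms unfolding finsat_def by blast
  have "sat N (asg a (cs i)) (\<phi>s i) \<longleftrightarrow> i = i0" if "i < rr" for i
    using a(2) that bspec[OF a(2), of "(Ng (\<phi>s i), cs i)"] unfolding F_def by auto
  moreover have "sat N (asg a (bs j)) \<psi> \<longleftrightarrow> j = j0" if "j < nn" for j
    using a(2) that bspec[OF a(2), of "(Ng \<psi>, bs j)"] unfolding F_def by auto
  ultimately show "\<exists>a\<in>dom N. (\<forall>i<rr. a \<in> defset N (\<phi>s i) (cs i) \<longleftrightarrow> i = i0) \<and>
      (\<forall>j<nn. a \<in> defset N \<psi> (bs j) \<longleftrightarrow> j = j0)"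
    using a(1) by (auto simp: defset_def)
qed

lemma complete_theory_transfer_ict_pattern:
  assumes T: "complete_theory fa ra T" and N: "models fa ra N T" and M: "models fa ra M T"
    and \<phi>s: "\<And>i. wf_fm fa ra (\<phi>s i) \<and> fv (\<phi>s i) \<subseteq> {0..length (cs i)} \<and> set (cs i) \<subseteq> dom N"
    and \<psi>: "wf_fm fa ra \<psi>" "fv \<psi> \<subseteq> {0..n}"
    and bs: "\<And>j. length (bs j) = n \<and> set (bs j) \<subseteq> dom N"
    and pattern: "ict_pattern (dom N) (\<lambda>i. defset N (\<phi>s i) (cs i)) (\<lambda>j. defset N \<psi> (bs j)) rr nn"
  obtains cs' bs' where "\<And>i. length (cs' i) = length (cs i) \<and> set (cs' i) \<subseteq> dom M"
    and "\<And>j. length (bs' j) = n \<and> set (bs' j) \<subseteq> dom M"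
    and "ict_pattern (dom M) (\<lambda>i. defset M (\<phi>s i) (cs' i)) (\<lambda>j. defset M \<psi> (bs' j)) rr nn"
proof -
  define tup where "tup s = (if even s then cs (s div 2) else bs (s div 2))" for s
  obtain d where d: "d \<in> dom N"
    using N unfolding models_def is_struct_def by blast
  have "read_slot (slot_asg d tup) (2 * i) (length (cs i)) = cs i" for i
    using read_slot_slot_asg[of d tup "2 * i"] by (simp add: tup_def)
  moreover have "read_slot (slot_asg d tup) (Suc (2 * j)) n = bs j" for j
    using read_slot_slot_asg[of d tup "Suc (2 * j)"] bs by (simp add: tup_def)
  ultimately have "sat N (slot_asg d tup) (pattern_fm \<phi>s \<psi> rr nn)"
    using pattern \<phi>s \<psi>(2) by (subst sat_pattern_fm[where lc = "\<lambda>i. length (cs i)"]) auto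
  moreover have "slot_asg d tup v \<in> dom N" for v
    using d \<phi>s bs by (intro slot_asg_in) (auto simp: tup_def)
  ultimately obtain e where e: "\<forall>v. e v \<in> dom M" and "sat M e (pattern_fm \<phi>s \<psi> rr nn)"
    using complete_theory_transfer_sat[OF T N M] wf_fm_pattern_fm \<phi>s \<psi>(1) by metis
  then have "ict_pattern (dom M) (\<lambda>i. defset M (\<phi>s i) (read_slot e (2 * i) (length (cs i))))
      (\<lambda>j. defset M \<psi> (read_slot e (Suc (2 * j)) n)) rr nn"
    using \<phi>s \<psi>(2) by (subst (asm) sat_pattern_fm) auto
  with e show thesis
    by (intro that) (auto intro: set_read_slot_subset[OF e, THEN subsetD])
qed

section \<open>Convex pieces in a linear order\<close>

definition union_of_convex :: "('a, 'f, 'r) struct \<Rightarrow> ('a \<times> 'a) set \<Rightarrow> nat \<Rightarrow> 'a set \<Rightarrow> bool" where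
  "union_of_convex M r k S \<longleftrightarrow>
     (\<exists>C. finite C \<and> card C \<le> k \<and> (\<forall>P\<in>C. convex_in M r P) \<and> \<Union>C = S)"

lemma linear_order_on_connex:
  "linear_order_on D r \<Longrightarrow> x \<in> D \<Longrightarrow> y \<in> D \<Longrightarrow> x \<noteq> y \<Longrightarrow> (x, y) \<in> r \<or> (y, x) \<in> r"
  unfolding linear_order_on_def total_on_def by blast

lemma convex_in_between:
  "convex_in M r S \<Longrightarrow> a \<in> S \<Longrightarrow> c \<in> S \<Longrightarrow> d \<in> dom M \<Longrightarrow> (a, d) \<in> r \<Longrightarrow> (d, c) \<in> r \<Longrightarrow> d \<in> S"
  unfolding convex_in_def by blast

lemma convex_in_subset_dom: "convex_in M r S \<Longrightarrow> S \<subseteq> dom M"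
  unfolding convex_in_def by blast

lemma convex_in_escape:
  assumes r: "linear_order_on (dom M) r"
    and P: "convex_in M r P" "P \<subseteq> A" "u \<in> P" "u' \<in> P"
    and E: "convex_in M r E" "u \<in> E" "v \<in> E" "v \<notin> A"
    and uu': "(u, u') \<in> r" and uv: "(u, v) \<in> r"
  shows "u' \<in> E"
proof -
  have v: "v \<in> dom M" and u': "u' \<in> dom M"
    using P(1,4) E(1,3) convex_in_subset_dom by blast+
  have "(v, u') \<notin> r"
  proof
    assume "(v, u') \<in> r"
    then have "v \<in> P"
      using convex_in_between[OF P(1,3,4) v uv] by blast
    with P(2) E(4) show False by blast
  qed
  moreover have "u' \<noteq> v"
    using P(2,4) E(4) by blast
  ultimately have "(u', v) \<in> r"
    using linear_order_on_connex[OF r u' v] by blast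
  then show "u' \<in> E"
    using convex_in_between[OF E(1,2,3) u' uu'] by blast
qed

text \<open>Pigeonhole: two of the \<open>K + 1\<close> points share a convex piece of \<open>B\<close>, and the smaller one
  escapes its own row inside that piece.\<close>

lemma union_of_convex_escape:
  assumes r: "linear_order_on (dom M) r"
    and B: "union_of_convex M r K B"
    and q: "\<And>i. i < Suc K \<Longrightarrow> q i \<in> B"
    and sep: "\<And>i i'. i < Suc K \<Longrightarrow> i' < Suc K \<Longrightarrow> q i \<in> A i' \<longleftrightarrow> i' = i"
  shows "\<exists>i<Suc K. \<exists>E v. convex_in M r E \<and> E \<subseteq> B \<and> q i \<in> E \<and> v \<in> E \<and> v \<notin> A i \<and> (q i, v) \<in> r"
proof -
  obtain C where C: "finite C" "card C \<le> K" "\<forall>P\<in>C. convex_in M r P" "\<Union>C = B"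
    using B unfolding union_of_convex_def by blast
  have "\<forall>i<Suc K. \<exists>E. E \<in> C \<and> q i \<in> E"
    using q C(4) by blast
  then obtain h where h: "\<And>i. i < Suc K \<Longrightarrow> h i \<in> C \<and> q i \<in> h i"
    by metis
  have "\<not> inj_on h {..<Suc K}"
  proof
    assume "inj_on h {..<Suc K}"
    then have "card {..<Suc K} \<le> card C"
      using h C(1) by (intro card_inj_on_le) auto
    with C(2) show False by simp
  qed
  then obtain i1 i2 where i: "i1 < Suc K" "i2 < Suc K" "i1 \<noteq> i2" "h i1 = h i2"
    unfolding inj_on_def by auto
  define E where "E = h i1"
  have E: "convex_in M r E" "E \<subseteq> B" "q i1 \<in> E" "q i2 \<in> E"
    using h i C(3,4) unfolding E_def by auto
  have sep12: "q i1 \<in> A i1" "q i2 \<notin> A i1" "q i2 \<in> A i2" "q i1 \<notin> A i2"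
    using sep i by auto
  have "q i1 \<in> dom M" "q i2 \<in> dom M"
    using E(1,3,4) convex_in_subset_dom by blast+
  moreover have "q i1 \<noteq> q i2"
    using sep12 by metis
  ultimately
  consider "(q i1, q i2) \<in> r" | "(q i2, q i1) \<in> r"
    using linear_order_on_connex[OF r] by blast
  then show ?thesis
  proof cases
    case 1
    with E sep12 i(1) show ?thesis by blast
  next
    case 2
    with E sep12 i(2) show ?thesis by blast
  qed
qed

lemma ict_pattern_inj_row_pieces:
  assumes r: "linear_order_on (dom M) r"
    and CA: "\<And>i. i < Suc K \<Longrightarrow> (\<forall>P\<in>CA i. convex_in M r P) \<and> \<Union>(CA i) = A i"
    and B: "\<And>j. j < nn \<Longrightarrow> union_of_convex M r K (B j)"
    and p: "\<And>i j. i < Suc K \<Longrightarrow> j < nn \<Longrightarrow> p i j \<in> dom M \<and>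
      (\<forall>i'<Suc K. p i j \<in> A i' \<longleftrightarrow> i' = i) \<and> (\<forall>j'<nn. p i j \<in> B j' \<longleftrightarrow> j' = j)"
  obtains f where "inj_on f {..<nn}" "f ` {..<nn} \<subseteq> Sigma {..<Suc K} CA"
proof -
  define escapes where "escapes j i \<longleftrightarrow> (\<exists>E v. convex_in M r E \<and> E \<subseteq> B j \<and>
      p i j \<in> E \<and> v \<in> E \<and> v \<notin> A i \<and> (p i j, v) \<in> r)" for j i
  have "\<exists>i<Suc K. escapes j i" if j: "j < nn" for j
    unfolding escapes_def
  proof (rule union_of_convex_escape[OF r B[OF j], where q = "\<lambda>i. p i j"])
    show "p i j \<in> B j" "p i j \<in> A i' \<longleftrightarrow> i' = i" if "i < Suc K" "i' < Suc K" for i i'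
      using p[OF that(1) j] j that(2) by auto
  qed
  then obtain I where I: "\<And>j. j < nn \<Longrightarrow> I j < Suc K \<and> escapes j (I j)"
    by metis
  have "\<forall>j<nn. \<exists>P. P \<in> CA (I j) \<and> p (I j) j \<in> P"
    using p I CA by (metis Union_iff)
  then obtain Pc where Pc: "\<And>j. j < nn \<Longrightarrow> Pc j \<in> CA (I j) \<and> p (I j) j \<in> Pc j"
    by metis
  txt \<open>A point of column \<open>j'\<close> between a point of column \<open>j\<close> and its escape point would lie
    in column \<open>j\<close>.\<close>
  have clash: False
    if j: "j < nn" "j' < nn" "j \<noteq> j'" and same: "I j' = I j" "Pc j' = Pc j"
      and less: "(p (I j) j, p (I j) j') \<in> r" for j j'
  proof -
    define i where "i = I j"
    obtain E v where E: "convex_in M r E" "E \<subseteq> B j" "p i j \<in> E" "v \<in> E" "v \<notin> A i"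
        "(p i j, v) \<in> r"
      using I j(1) unfolding escapes_def i_def by blast
    have i: "i < Suc K"
      using I j(1) unfolding i_def by blast
    have P: "convex_in M r (Pc j)" "Pc j \<subseteq> A i" "p i j \<in> Pc j" "p i j' \<in> Pc j"
      using CA[OF i] Pc[OF j(1)] Pc[OF j(2)] same unfolding i_def by auto
    have "p i j' \<in> E"
      using convex_in_escape[OF r P E(1,3,4,5)] less E(6) unfolding i_def by blast
    with E(2) have "p i j' \<in> B j" by blast
    with p[OF i j(2)] j show False by auto
  qed
  have "inj_on (\<lambda>j. (I j, Pc j)) {..<nn}"
  proof (rule inj_onI, rule ccontr)
    fix j j' assume j: "j \<in> {..<nn}" "j' \<in> {..<nn}" and same: "(I j, Pc j) = (I j', Pc j')"
      and "j \<noteq> j'"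
    have i: "I j < Suc K"
      using I j(1) by blast
    have "p (I j) j \<in> dom M" "p (I j) j' \<in> dom M" "p (I j) j \<noteq> p (I j) j'"
      using p[OF i, of j] p[OF i, of j'] j \<open>j \<noteq> j'\<close> by auto
    then consider "(p (I j) j, p (I j) j') \<in> r" | "(p (I j') j', p (I j') j) \<in> r"
      using linear_order_on_connex[OF r] same by fastforce
    then show False
      using clash[of j j'] clash[of j' j] j same \<open>j \<noteq> j'\<close> by cases auto
  qed
  moreover have "(\<lambda>j. (I j, Pc j)) ` {..<nn} \<subseteq> Sigma {..<Suc K} CA"
    using I Pc by auto
  ultimately show thesis
    by (rule that)
qed

lemma union_of_convex_no_ict_pattern:
  assumes r: "linear_order_on (dom M) r"
    and A: "\<And>i. i < Suc K \<Longrightarrow> union_of_convex M r (Kf i) (A i)"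
    and B: "\<And>j. j < nn \<Longrightarrow> union_of_convex M r K (B j)"
    and nn: "(\<Sum>i<Suc K. Kf i) < nn"
  shows "\<not> ict_pattern (dom M) A B (Suc K) nn"
proof
  assume "ict_pattern (dom M) A B (Suc K) nn"
  then have "\<forall>i<Suc K. \<forall>j<nn. \<exists>a. a \<in> dom M \<and>
      (\<forall>i'<Suc K. a \<in> A i' \<longleftrightarrow> i' = i) \<and> (\<forall>j'<nn. a \<in> B j' \<longleftrightarrow> j' = j)"
    unfolding ict_pattern_def by blast
  then obtain p where p: "\<And>i j. i < Suc K \<Longrightarrow> j < nn \<Longrightarrow> p i j \<in> dom M \<and>
      (\<forall>i'<Suc K. p i j \<in> A i' \<longleftrightarrow> i' = i) \<and> (\<forall>j'<nn. p i j \<in> B j' \<longleftrightarrow> j' = j)"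
    by metis
  have "\<forall>i<Suc K. \<exists>C. finite C \<and> card C \<le> Kf i \<and> (\<forall>P\<in>C. convex_in M r P) \<and> \<Union>C = A i"
    using A unfolding union_of_convex_def by blast
  then obtain CA where CA: "\<And>i. i < Suc K \<Longrightarrow>
      finite (CA i) \<and> card (CA i) \<le> Kf i \<and> (\<forall>P\<in>CA i. convex_in M r P) \<and> \<Union>(CA i) = A i"
    by metis
  obtain f where "inj_on f {..<nn}" "f ` {..<nn} \<subseteq> Sigma {..<Suc K} CA"
    using ict_pattern_inj_row_pieces[OF r _ B p] CA by blast
  then have "card {..<nn} \<le> card (Sigma {..<Suc K} CA)"
    using CA by (intro card_inj_on_le) auto
  also have "\<dots> = (\<Sum>i<Suc K. card (CA i))"
    using CA by simp
  also have "\<dots> \<le> (\<Sum>i<Suc K. Kf i)"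
    using CA by (intro sum_mono) auto
  finally show False
    using nn by simp
qed

lemma convexly_orderable_union_of_convex:
  assumes "convexly_orderable fa ra M"
  obtains r where "linear_order_on (dom M) r"
    and "\<And>\<phi> n. wf_fm fa ra \<phi> \<Longrightarrow> fv \<phi> \<subseteq> {0..n} \<Longrightarrow>
      \<exists>K. \<forall>bs. length bs = n \<and> set bs \<subseteq> dom M \<longrightarrow> union_of_convex M r K (defset M \<phi> bs)"
proof -
  obtain r where r: "linear_order_on (dom M) r" and H: "\<forall>\<phi> n. wf_fm fa ra \<phi> \<and> fv \<phi> \<subseteq> {0..n} \<longrightarrow>
      (\<exists>K::nat. \<forall>bs. length bs = n \<and> set bs \<subseteq> dom M \<longrightarrow> union_of_convex M r K (defset M \<phi> bs))"
    using assms unfolding convexly_orderable_def union_of_convex_def by blast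
  show thesis
    by (rule that[OF r]) (use H in blast)
qed

lemma convexly_orderable_ict_pattern_bound:
  assumes "convexly_orderable fa ra M"
    and \<phi>s: "\<And>i. wf_fm fa ra (\<phi>s i) \<and> fv (\<phi>s i) \<subseteq> {0..lc i}"
    and \<psi>: "wf_fm fa ra \<psi>" "fv \<psi> \<subseteq> {0..n}"
  obtains rr nn where "\<And>cs (bs :: nat \<Rightarrow> _). (\<And>i. length (cs i) = lc i \<and> set (cs i) \<subseteq> dom M) \<Longrightarrow>
      (\<And>j. length (bs j) = n \<and> set (bs j) \<subseteq> dom M) \<Longrightarrow>
      \<not> ict_pattern (dom M) (\<lambda>i. defset M (\<phi>s i) (cs i)) (\<lambda>j. defset M \<psi> (bs j)) rr nn"
proof -
  obtain r where r: "linear_order_on (dom M) r"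
    and convex: "\<And>\<chi> m. wf_fm fa ra \<chi> \<Longrightarrow> fv \<chi> \<subseteq> {0..m} \<Longrightarrow> \<exists>K. \<forall>xs. length xs = m \<and>
      set xs \<subseteq> dom M \<longrightarrow> union_of_convex M r K (defset M \<chi> xs)"
    using convexly_orderable_union_of_convex[OF assms(1)] by metis
  obtain K where K: "\<And>xs. length xs = n \<Longrightarrow> set xs \<subseteq> dom M \<Longrightarrow>
      union_of_convex M r K (defset M \<psi> xs)"
    using convex[OF \<psi>] by blast
  have "\<forall>i. \<exists>k. \<forall>xs. length xs = lc i \<and> set xs \<subseteq> dom M \<longrightarrow>
      union_of_convex M r k (defset M (\<phi>s i) xs)"
    using convex \<phi>s by blast
  then obtain Kf where Kf: "\<And>i xs. length xs = lc i \<Longrightarrow> set xs \<subseteq> dom M \<Longrightarrow>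
      union_of_convex M r (Kf i) (defset M (\<phi>s i) xs)"
    by metis
  show thesis
  proof (rule that[of "Suc K" "Suc (\<Sum>i<Suc K. Kf i)"])
    fix cs bs
    assume cs: "\<And>i. length (cs i) = lc i \<and> set (cs i) \<subseteq> dom M"
      and bs: "\<And>j::nat. length (bs j) = n \<and> set (bs j) \<subseteq> dom M"
    show "\<not> ict_pattern (dom M) (\<lambda>i. defset M (\<phi>s i) (cs i)) (\<lambda>j. defset M \<psi> (bs j))
        (Suc K) (Suc (\<Sum>i<Suc K. Kf i))"
      using cs bs by (intro union_of_convex_no_ict_pattern[OF r, where Kf = Kf] Kf K) simp_all
  qed
qed

theorem proposition1p5:
  fixes fa :: "'f \<Rightarrow> nat" and ra :: "'r \<Rightarrow> nat" and T :: "('f, 'r) fm set"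
  assumes "complete_theory fa ra T"
    and "convexly_orderable_thy fa ra T TYPE('a)"
  shows "dp_small_thy fa ra T TYPE('b)"
  unfolding dp_small_thy_def
proof (intro allI impI notI)
  fix N :: "('b, 'f, 'r) struct"
  assume N: "models fa ra N T" and "dp_pattern fa ra N"
  then obtain \<phi>s :: "nat \<Rightarrow> ('f, 'r) fm" and cs :: "nat \<Rightarrow> 'b list" and \<psi> n
    and bs :: "nat \<Rightarrow> 'b list" where
    \<phi>s: "\<forall>i. wf_fm fa ra (\<phi>s i) \<and> fv (\<phi>s i) \<subseteq> {0..length (cs i)} \<and> set (cs i) \<subseteq> dom N"
    and \<psi>: "wf_fm fa ra \<psi>" "fv \<psi> \<subseteq> {0..n}"
    and bs: "\<forall>j. length (bs j) = n \<and> set (bs j) \<subseteq> dom N"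
    and cells: "\<forall>i0 j0. finsat N ({(\<phi>s i0, cs i0), (\<psi>, bs j0)}
      \<union> {(Ng (\<phi>s i), cs i) | i. i \<noteq> i0} \<union> {(Ng \<psi>, bs j) | j. j \<noteq> j0})"
    unfolding dp_pattern_def by blast
  obtain M :: "('a, 'f, 'r) struct" where M: "models fa ra M T"
    and "convexly_orderable fa ra M"
    using assms(2) unfolding convexly_orderable_thy_def by blast
  then obtain rr nn where bound: "\<And>cs' bs'.
      (\<And>i. length (cs' i) = length (cs i) \<and> set (cs' i) \<subseteq> dom M) \<Longrightarrow>
      (\<And>j. length (bs' j) = n \<and> set (bs' j) \<subseteq> dom M) \<Longrightarrow>
      \<not> ict_pattern (dom M) (\<lambda>i. defset M (\<phi>s i) (cs' i)) (\<lambda>j. defset M \<psi> (bs' j)) rr nn"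
    using convexly_orderable_ict_pattern_bound[OF \<open>convexly_orderable fa ra M\<close>,
        of \<phi>s "\<lambda>i. length (cs i)" \<psi> n] \<phi>s \<psi> by blast
  have "ict_pattern (dom N) (\<lambda>i. defset N (\<phi>s i) (cs i)) (\<lambda>j. defset N \<psi> (bs j)) rr nn"
    using cells by (rule finsat_ict_pattern)
  then obtain cs' bs' where "\<And>i. length (cs' i) = length (cs i) \<and> set (cs' i) \<subseteq> dom M"
    and "\<And>j. length (bs' j) = n \<and> set (bs' j) \<subseteq> dom M"
    and "ict_pattern (dom M) (\<lambda>i. defset M (\<phi>s i) (cs' i)) (\<lambda>j. defset M \<psi> (bs' j)) rr nn"
    using complete_theory_transfer_ict_pattern[OF assms(1) N M, of \<phi>s cs \<psi> n bs rr nn] \<phi>s \<psi> bs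
    by blast
  with bound show False
    by blast
qed

end
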